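(* Let $\sigma\in(0,\infty)$, $n\geqslant1$, $\eta=3$, and $(v_0,v_1,v_2)\in\mathcal{B}_{\sigma}$. Then the solution $v$ of $(\mathrm{L})$ satisfies, for all $t\geqslant0$, $$\|v(t,\cdot)\|_{L^2}\lesssim (1+t)^{-\frac{3n-8\sigma}{4\sigma}}\|(v_0,v_1,v_2)\|_{\mathcal{B}_{\sigma}},\qquad \|v(t,\cdot)\|_{\dot{H}^{\frac{4}{3}\sigma}}\lesssim (1+t)^{-\frac{3n}{4\sigma}}\|(v_0,v_1,v_2)\|_{\mathcal{B}_{\sigma}}.$$ Moreover, defining $w_{[3]}$ by $\widehat{w}_{[3]}(t,\xi):=\frac{t^2}{2}\mathrm{e}^{-|\xi|^{\frac{2}{3}\sigma }t}\,\widehat{v}_2(\xi)$, one has $$\|v(t,\cdot)-w_{[3]}(t,\cdot)\|_{L^2}\lesssim (1+t)^{-\frac{3n-4\sigma}{4\sigma}}\|(v_0,v_1,v_2)\|_{\mathcal{B}_{\sigma}},\quad \|v(t,\cdot)-w_{[3]}(t,\cdot)\|_{\dot{H}^{\frac{4}{3}\sigma}}\lesssim (1+t)^{-\frac{3n+4\sigma}{4\sigma}}\|(v_0,v_1,v_2)\|_{\mathcal{B}_{\sigma}}.$$ Finally, if $v_0\equiv0\equiv v_1$ and $v_2\in L^2$, then $\|v(t,\cdot)\|_{\dot{H}^{\frac{4}{3}\sigma}}\lesssim\|v_2\|_{L^2}$ for all $t\geqslant0$.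
   Context: For $\sigma>0$, $\alpha\in[0,1]$, $\mathcal{A}^{\alpha}=(-\Delta)^{\sigma\alpha}$ is the Fourier multiplier $|\xi|^{2\sigma\alpha}$, $\mathcal{A}=(-\Delta)^\sigma$. The linear problem $(\mathrm{L})$ is $v_{ttt}+\mathcal{A}v+\eta\mathcal{A}^{\frac{1}{3}}v_{tt}+\eta\mathcal{A}^{\frac{2}{3}}v_t=0$ for $x\in\mathbb{R}^n$, $t>0$, $v(0)=v_0$, $v_t(0)=v_1$, $v_{tt}(0)=v_2$, solved via partial Fourier transform in $x$. $\mathcal{B}_{\sigma}:=(H^{\frac{4}{3}\sigma}\cap L^1)\times (H^{\frac{2}{3}\sigma}\cap L^1)\times (L^2\cap L^1)$ with the sum norm; $\dot H^s$ has norm $\||\xi|^s\hat f\|_{L^2}$. $\lesssim$ is up to a constant independent of $t$ and the data. *)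

theory Defs
  imports "HOL-Analysis.Analysis"
begin

definition fourier :: "(real^'n \<Rightarrow> complex) \<Rightarrow> real^'n \<Rightarrow> complex" where
  "fourier f \<xi> = integral\<^sup>L lborel (\<lambda>x. cis (- (x \<bullet> \<xi>)) * f x)"

definition in_L1 :: "(real^'n \<Rightarrow> complex) \<Rightarrow> bool" where
  "in_L1 f \<longleftrightarrow> integrable lborel f"

definition L1norm :: "(real^'n \<Rightarrow> complex) \<Rightarrow> real" where
  "L1norm f = integral\<^sup>L lborel (\<lambda>x. cmod (f x))"

definition sq_int :: "(real^'n \<Rightarrow> complex) \<Rightarrow> bool" where
  "sq_int f \<longleftrightarrow> f \<in> borel_measurable lborel \<and> integrable lborel (\<lambda>x. (cmod (f x))\<^sup>2)"

definition L2norm :: "(real^'n \<Rightarrow> complex) \<Rightarrow> real" where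
  "L2norm f = sqrt (integral\<^sup>L lborel (\<lambda>x. (cmod (f x))\<^sup>2))"

definition hom_weight :: "real \<Rightarrow> (real^'n \<Rightarrow> complex) \<Rightarrow> real^'n \<Rightarrow> complex" where
  "hom_weight s g \<xi> = complex_of_real (norm \<xi> powr s) * g \<xi>"

definition inh_weight :: "real \<Rightarrow> (real^'n \<Rightarrow> complex) \<Rightarrow> real^'n \<Rightarrow> complex" where
  "inh_weight s g \<xi> = complex_of_real ((1 + (norm \<xi>)\<^sup>2) powr (s / 2)) * g \<xi>"

definition in_Hs_L1 :: "real \<Rightarrow> (real^'n \<Rightarrow> complex) \<Rightarrow> bool" where
  "in_Hs_L1 s f \<longleftrightarrow> in_L1 f \<and> sq_int (inh_weight s (fourier f))"

definition Hs_L1_norm :: "real \<Rightarrow> (real^'n \<Rightarrow> complex) \<Rightarrow> real" where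
  "Hs_L1_norm s f = L2norm (inh_weight s (fourier f)) + L1norm f"

definition in_B :: "real \<Rightarrow> (real^'n \<Rightarrow> complex) \<Rightarrow> (real^'n \<Rightarrow> complex) \<Rightarrow> (real^'n \<Rightarrow> complex) \<Rightarrow> bool" where
  "in_B \<sigma> v0 v1 v2 \<longleftrightarrow> in_Hs_L1 (4*\<sigma>/3) v0 \<and> in_Hs_L1 (2*\<sigma>/3) v1 \<and> in_Hs_L1 0 v2"

definition B_norm :: "real \<Rightarrow> (real^'n \<Rightarrow> complex) \<Rightarrow> (real^'n \<Rightarrow> complex) \<Rightarrow> (real^'n \<Rightarrow> complex) \<Rightarrow> real" where
  "B_norm \<sigma> v0 v1 v2 = Hs_L1_norm (4*\<sigma>/3) v0 + Hs_L1_norm (2*\<sigma>/3) v1 + Hs_L1_norm 0 v2"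

text \<open>V(t,xi) is the partial Fourier transform of a solution of (L): for each frequency xi,
  t \<mapsto> V t xi solves the third order ODE
  V''' + |xi|^(2s) V + eta |xi|^(2s/3) V'' + eta |xi|^(4s/3) V' = 0 (t > 0)
  with V(0)=u0 xi, V'(0)=u1 xi, V''(0)=u2 xi (one-sided derivatives at t = 0).\<close>
definition solves_L :: "real \<Rightarrow> real \<Rightarrow> (real^'n \<Rightarrow> complex) \<Rightarrow> (real^'n \<Rightarrow> complex)
    \<Rightarrow> (real^'n \<Rightarrow> complex) \<Rightarrow> (real \<Rightarrow> real^'n \<Rightarrow> complex) \<Rightarrow> bool" where
  "solves_L \<sigma> \<eta> u0 u1 u2 V \<longleftrightarrow>
    (\<forall>\<xi>. \<exists>D1 D2 D3 :: real \<Rightarrow> complex.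
       (\<forall>t\<ge>0. ((\<lambda>s. V s \<xi>) has_vector_derivative D1 t) (at t within {0..})) \<and>
       (\<forall>t\<ge>0. (D1 has_vector_derivative D2 t) (at t within {0..})) \<and>
       (\<forall>t>0. (D2 has_vector_derivative D3 t) (at t)) \<and>
       (\<forall>t>0. D3 t + complex_of_real (norm \<xi> powr (2*\<sigma>)) * V t \<xi>
                + complex_of_real (\<eta> * norm \<xi> powr (2*\<sigma>/3)) * D2 t
                + complex_of_real (\<eta> * norm \<xi> powr (4*\<sigma>/3)) * D1 t = 0) \<and>
       V 0 \<xi> = u0 \<xi> \<and> D1 0 = u1 \<xi> \<and> D2 0 = u2 \<xi>)"

end

(*
  For \<eta> = 3 the symbol of (L) is (\<lambda> + a)\<^sup>3 with the damping rate a = |\<xi>|^(2\<sigma>/3), so the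
  Fourier transform of v is e^(-at) times a quadratic polynomial in t with the data as
  coefficients. Weighting by a\<^sup>2 (the homogeneous H^(4\<sigma>/3) norm) or removing the term
  t\<^sup>2/2 e^(-at) v\<^sub>2 (the transform of w_[3]) changes this polynomial; writing a = s/t, every
  coefficient is a power of t times at most (1 + s)\<^sup>4 e^(-s) \<le> 8\<^sup>4 e^(-s/2). For t \<le> 1 the
  remaining powers of a are absorbed by the Sobolev weights of the data. For t \<ge> 1 the
  transformed data are bounded by their L\<^sup>1 norms, and the L\<^sup>2 norm of e^(-at/2) is
  O(t^(-3n/(4\<sigma>))) by a layer-cake estimate; the powers of t then give the four rates.
*)

theory Submission
  imports Defs "HOL-Real_Asymp.Real_Asymp"
begin

section \<open>The triple-root ODE\<close>

lemma eq_on_Ici_if_derivatives_eq: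
  fixes f g :: "real \<Rightarrow> 'a::banach"
  assumes f: "\<And>t. t \<ge> 0 \<Longrightarrow> (f has_vector_derivative f' t) (at t within {0..})"
    and g: "\<And>t. t \<ge> 0 \<Longrightarrow> (g has_vector_derivative g' t) (at t within {0..})"
    and eq: "\<And>t. t > 0 \<Longrightarrow> f' t = g' t" and "f 0 = g 0" and "t \<ge> 0"
  shows "f t = g t"
proof -
  have d: "((\<lambda>x. f x - g x) has_vector_derivative f' x - g' x) (at x within {0..t})"
    if "x \<in> {0..t}" for x
    using that by (intro has_vector_derivative_diff has_vector_derivative_within_subset[OF f]
        has_vector_derivative_within_subset[OF g]) auto
  have "f t - g t = f 0 - g 0"
  proof (rule has_derivative_zero_unique_strong_interval[of "{0}" 0 t])
    show "continuous_on {0..t} (\<lambda>x. f x - g x)"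
      unfolding continuous_on_eq_continuous_within using d has_vector_derivative_continuous by blast
    show "((\<lambda>x. f x - g x) has_derivative (\<lambda>h. 0)) (at x within {0..t})" if "x \<in> {0..t} - {0}" for x
      using d[of x] eq[of x] that by (simp add: has_vector_derivative_def)
  qed (use \<open>t \<ge> 0\<close> in auto)
  then show ?thesis using \<open>f 0 = g 0\<close> by simp
qed

lemma quadratic_if_third_derivative_zero:
  fixes P0 P1 P2 :: "real \<Rightarrow> 'a::banach"
  assumes d0: "\<And>t. t \<ge> 0 \<Longrightarrow> (P0 has_vector_derivative P1 t) (at t within {0..})"
    and d1: "\<And>t. t \<ge> 0 \<Longrightarrow> (P1 has_vector_derivative P2 t) (at t within {0..})"
    and d2: "\<And>t. t > 0 \<Longrightarrow> (P2 has_vector_derivative 0) (at t)"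
    and "t \<ge> 0"
  shows "P0 t = P0 0 + t *\<^sub>R P1 0 + (t\<^sup>2 / 2) *\<^sub>R P2 0"
proof -
  obtain c where c: "\<And>t. t > 0 \<Longrightarrow> P2 t = c"
    using has_derivative_zero_constant[of "{0<..}" P2] d2
    by (auto simp: has_vector_derivative_def intro: has_derivative_at_withinI)
  have lin: "((\<lambda>t. P1 0 + t *\<^sub>R c) has_vector_derivative c) (at t within {0..})" for t
    by (auto intro!: derivative_eq_intros)
  have P1: "P1 t = P1 0 + t *\<^sub>R c" if "t \<ge> 0" for t
    by (rule eq_on_Ici_if_derivatives_eq[OF d1 lin]) (simp_all add: c that)
  have "P2 0 = c"
  proof (rule vector_derivative_unique_within[OF _ d1[of 0]])
    show "at (0::real) within {0..} \<noteq> bot"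
      by (simp add: at_within_Ici_at_right)
    show "(P1 has_vector_derivative c) (at 0 within {0..})"
      by (rule has_vector_derivative_transform_within[OF lin, of 1]) (auto intro: P1[symmetric])
  qed simp
  have quad: "((\<lambda>t. P0 0 + t *\<^sub>R P1 0 + (t\<^sup>2 / 2) *\<^sub>R P2 0) has_vector_derivative P1 0 + t *\<^sub>R c)
      (at t within {0..})" for t
    unfolding \<open>P2 0 = c\<close> by (auto intro!: derivative_eq_intros)
  show ?thesis
    by (rule eq_on_Ici_if_derivatives_eq[OF d0 quad]) (auto intro: P1 \<open>t \<ge> 0\<close>)
qed

text \<open>The solutions of \<open>(d/dt + a)\<^sup>3 v = 0\<close> with initial values \<open>(v, v', v'')\<close> equal to
  \<open>(1, 0, 0)\<close>, \<open>(0, 1, 0)\<close> and \<open>(0, 0, 1)\<close>.\<close>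

definition triple_root_kernel0 :: "real \<Rightarrow> real \<Rightarrow> real" where
  "triple_root_kernel0 a t = exp (- a * t) * (1 + a * t + (a * t)\<^sup>2 / 2)"

definition triple_root_kernel1 :: "real \<Rightarrow> real \<Rightarrow> real" where
  "triple_root_kernel1 a t = t * exp (- a * t) * (1 + a * t)"

definition triple_root_kernel2 :: "real \<Rightarrow> real \<Rightarrow> real" where
  "triple_root_kernel2 a t = t\<^sup>2 / 2 * exp (- a * t)"

definition triple_root_solution :: "real \<Rightarrow> real \<Rightarrow> complex \<Rightarrow> complex \<Rightarrow> complex \<Rightarrow> complex" where
  "triple_root_solution a t A0 A1 A2 = of_real (triple_root_kernel0 a t) * A0
     + of_real (triple_root_kernel1 a t) * A1 + of_real (triple_root_kernel2 a t) * A2"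

lemma has_vector_derivative_exp_mult:
  fixes F :: "real \<Rightarrow> complex"
  assumes "(F has_vector_derivative F') (at t within S)"
  shows "((\<lambda>x. of_real (exp (a * x)) * F x) has_vector_derivative
           of_real (exp (a * t)) * (F' + of_real a * F t)) (at t within S)"
  by (rule has_vector_derivative_eq_rhs, rule has_vector_derivative_mult[OF _ assms])
     (auto intro!: derivative_eq_intros simp: algebra_simps)

lemma triple_root_ode_solution:
  fixes V D1 D2 D3 :: "real \<Rightarrow> complex"
  assumes d1: "\<And>t. t \<ge> 0 \<Longrightarrow> (V has_vector_derivative D1 t) (at t within {0..})"
    and d2: "\<And>t. t \<ge> 0 \<Longrightarrow> (D1 has_vector_derivative D2 t) (at t within {0..})"
    and d3: "\<And>t. t > 0 \<Longrightarrow> (D2 has_vector_derivative D3 t) (at t)"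
    and ode: "\<And>t. t > 0 \<Longrightarrow>
      D3 t + of_real (a ^ 3) * V t + of_real (3 * a) * D2 t + of_real (3 * a\<^sup>2) * D1 t = 0"
    and "t \<ge> 0"
  shows "V t = triple_root_solution a t (V 0) (D1 0) (D2 0)"
proof -
  txt \<open>Integrating factor: with \<open>e = exp (a t)\<close>, the functions \<open>e V\<close>, \<open>P1\<close>, \<open>P2\<close> are the
    successive derivatives of \<open>e V\<close>, and \<open>P2' = e (d/dt + a)\<^sup>3 V = 0\<close>.\<close>
  define \<alpha> where "\<alpha> = complex_of_real a"
  define e where "e x = complex_of_real (exp (a * x))" for x
  define P1 where "P1 x = e x * (D1 x + \<alpha> * V x)" for x
  define P2 where "P2 x = e x * (D2 x + 2 * \<alpha> * D1 x + \<alpha>\<^sup>2 * V x)" for x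
  have open_at: "at x within {0..} = at x" if "x > 0" for x :: real
    by (rule at_within_interior) (use that in auto)
  have dP0: "((\<lambda>x. e x * V x) has_vector_derivative P1 x) (at x within {0..})" if "x \<ge> 0" for x
    unfolding e_def P1_def \<alpha>_def by (rule has_vector_derivative_exp_mult[OF d1[OF that]])
  have dP1: "(P1 has_vector_derivative P2 x) (at x within S)"
    if "(V has_vector_derivative D1 x) (at x within S)" "(D1 has_vector_derivative D2 x) (at x within S)"
    for x S
    unfolding P1_def[abs_def] e_def
    by (rule has_vector_derivative_eq_rhs, rule has_vector_derivative_exp_mult,
        rule has_vector_derivative_add[OF that(2) has_vector_derivative_mult_right[OF that(1)]])
       (simp add: P2_def e_def \<alpha>_def algebra_simps power2_eq_square)
  have dP2: "(P2 has_vector_derivative 0) (at x)" if "x > 0" for x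
  proof -
    have "(D1 has_vector_derivative D2 x) (at x)" "(V has_vector_derivative D1 x) (at x)"
      using d1[of x] d2[of x] that open_at[OF that] by auto
    then have "((\<lambda>x. D2 x + 2 * \<alpha> * D1 x + \<alpha>\<^sup>2 * V x) has_vector_derivative
        D3 x + 2 * \<alpha> * D2 x + \<alpha>\<^sup>2 * D1 x) (at x)"
      by (intro has_vector_derivative_add has_vector_derivative_mult_right d3 that)
    from has_vector_derivative_exp_mult[OF this, of a] show ?thesis
      unfolding P2_def[abs_def] e_def
      by (rule has_vector_derivative_eq_rhs)
         (use ode[OF that] in \<open>simp add: \<alpha>_def algebra_simps power2_eq_square power3_eq_cube\<close>)
  qed
  have "e t * V t = e 0 * V 0 + t *\<^sub>R P1 0 + (t\<^sup>2 / 2) *\<^sub>R P2 0"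
    by (rule quadratic_if_third_derivative_zero[OF dP0 dP1[OF d1 d2] dP2 \<open>t \<ge> 0\<close>])
  moreover have "e t * of_real (exp (- a * t)) = 1"
    by (simp add: e_def flip: of_real_mult exp_add)
  ultimately have "V t = of_real (exp (- a * t)) * (V 0 + t *\<^sub>R P1 0 + (t\<^sup>2 / 2) *\<^sub>R P2 0)"
    by (simp add: e_def) (metis mult.assoc mult.commute mult_1)
  then show ?thesis
    by (simp add: triple_root_solution_def triple_root_kernel0_def triple_root_kernel1_def
        triple_root_kernel2_def P1_def P2_def e_def \<alpha>_def scaleR_conv_of_real algebra_simps power2_eq_square)
qed

section \<open>Pointwise bounds for the triple-root kernels\<close>

definition damped_quartic :: "real \<Rightarrow> real" where
  "damped_quartic s = (1 + s) ^ 4 * exp (- s)"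

lemma damped_quartic_nonneg: "0 \<le> damped_quartic s"
  by (simp add: damped_quartic_def)

lemma damped_quartic_le_exp_half:
  assumes "s \<ge> 0"
  shows "damped_quartic s \<le> 8 ^ 4 * exp (- s / 2)"
proof -
  have "1 + s \<le> 8 * exp (s / 8)"
    using exp_ge_add_one_self[of "s / 8"] assms by linarith
  then have "(1 + s) ^ 4 \<le> (8 * exp (s / 8)) ^ 4"
    using assms by (intro power_mono) auto
  also have "\<dots> = 8 ^ 4 * exp (s / 2)"
    unfolding power_mult_distrib exp_of_nat_mult[symmetric] by simp
  finally have "(1 + s) ^ 4 * exp (- s) \<le> 8 ^ 4 * exp (s / 2) * exp (- s)"
    by (rule mult_right_mono) simp
  also have "\<dots> = 8 ^ 4 * exp (- s / 2)"
    unfolding mult.assoc exp_add[symmetric] by simp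
  finally show ?thesis
    by (simp add: damped_quartic_def)
qed

lemma damped_quartic_le_const:
  assumes "s \<ge> 0"
  shows "damped_quartic s \<le> 8 ^ 4"
  using damped_quartic_le_exp_half[OF assms] assms by (simp add: order_trans)

lemma exp_neg_mult_le_damped_quartic:
  assumes "s \<ge> 0" "q \<le> (1 + s) ^ 4"
  shows "exp (- s) * q \<le> damped_quartic s"
  using assms by (simp add: damped_quartic_def mult.commute)

lemma triple_root_kernel_bounds:
  fixes a t :: real
  assumes "a \<ge> 0" "t \<ge> 0"
  defines "G \<equiv> damped_quartic (a * t)"
  shows "triple_root_kernel0 a t \<le> G"
    and "triple_root_kernel1 a t \<le> t * G"
    and "triple_root_kernel2 a t \<le> t\<^sup>2 * G"
    and "a * triple_root_kernel1 a t \<le> G"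
    and "a\<^sup>2 * triple_root_kernel2 a t \<le> G"
    and "t\<^sup>2 * (a\<^sup>2 * triple_root_kernel0 a t) \<le> G"
    and "t * (a\<^sup>2 * triple_root_kernel1 a t) \<le> G"
proof -
  define s where "s = a * t"
  have s: "s \<ge> 0" using assms by (simp add: s_def)
  have quartic: "(1 + s) ^ 4 = 1 + 4 * s + 6 * s\<^sup>2 + 4 * s ^ 3 + s ^ 4"
    by algebra
  have pos: "0 \<le> s\<^sup>2" "0 \<le> s ^ 3" "0 \<le> s ^ 4" using s by auto
  have le: "exp (- s) * q \<le> G" if "q \<le> (1 + s) ^ 4" for q
    unfolding G_def s_def[symmetric] using exp_neg_mult_le_damped_quartic[OF s that] .
  have e: "exp (- a * t) = exp (- s)" by (simp add: s_def)
  show "triple_root_kernel0 a t \<le> G"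
    unfolding triple_root_kernel0_def e s_def[symmetric]
    by (rule le) (use quartic pos s in linarith)
  show "triple_root_kernel1 a t \<le> t * G"
    unfolding triple_root_kernel1_def e s_def[symmetric] mult.assoc
    by (intro mult_left_mono le \<open>t \<ge> 0\<close>) (use quartic pos s in linarith)
  show "triple_root_kernel2 a t \<le> t\<^sup>2 * G"
  proof -
    have "triple_root_kernel2 a t = t\<^sup>2 * (exp (- s) * (1 / 2))"
      unfolding triple_root_kernel2_def e by simp
    also have "\<dots> \<le> t\<^sup>2 * G"
      by (intro mult_left_mono le zero_le_power2) (use quartic pos s in linarith)
    finally show ?thesis .
  qed
  show "a * triple_root_kernel1 a t \<le> G"
  proof -
    have "a * triple_root_kernel1 a t = exp (- s) * (s + s\<^sup>2)"
      unfolding triple_root_kernel1_def e by (simp add: s_def algebra_simps power2_eq_square)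
    also have "\<dots> \<le> G" by (rule le) (use quartic pos s in linarith)
    finally show ?thesis .
  qed
  show "a\<^sup>2 * triple_root_kernel2 a t \<le> G"
  proof -
    have "a\<^sup>2 * triple_root_kernel2 a t = exp (- s) * (s\<^sup>2 / 2)"
      unfolding triple_root_kernel2_def e by (simp add: s_def power_mult_distrib)
    also have "\<dots> \<le> G" by (rule le) (use quartic pos s in linarith)
    finally show ?thesis .
  qed
  show "t\<^sup>2 * (a\<^sup>2 * triple_root_kernel0 a t) \<le> G"
  proof -
    have "t\<^sup>2 * (a\<^sup>2 * triple_root_kernel0 a t) = exp (- s) * (s\<^sup>2 + s ^ 3 + s ^ 4 / 2)"
      unfolding triple_root_kernel0_def e s_def by algebra
    also have "\<dots> \<le> G" by (rule le) (use quartic pos s in linarith)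
    finally show ?thesis .
  qed
  show "t * (a\<^sup>2 * triple_root_kernel1 a t) \<le> G"
  proof -
    have "t * (a\<^sup>2 * triple_root_kernel1 a t) = exp (- s) * (s\<^sup>2 + s ^ 3)"
      unfolding triple_root_kernel1_def e s_def by algebra
    also have "\<dots> \<le> G" by (rule le) (use quartic pos s in linarith)
    finally show ?thesis .
  qed
qed

lemma norm_lincomb3_le:
  fixes A B C :: complex
  assumes "0 \<le> a" "a \<le> d * x" "0 \<le> b" "b \<le> d * y" "0 \<le> c" "c \<le> d * z"
  shows "cmod (of_real a * A + of_real b * B + of_real c * C)
           \<le> d * (x * cmod A + y * cmod B + z * cmod C)"
proof -
  have "cmod (of_real a * A + of_real b * B + of_real c * C) \<le> a * cmod A + b * cmod B + c * cmod C"
    using assms norm_triangle_ineq[of "of_real a * A + of_real b * B" "of_real c * C"]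
      norm_triangle_ineq[of "of_real a * A" "of_real b * B"]
    by (simp add: norm_mult)
  also have "\<dots> \<le> (d * x) * cmod A + (d * y) * cmod B + (d * z) * cmod C"
    using assms by (intro add_mono mult_right_mono) auto
  finally show ?thesis by (simp add: algebra_simps)
qed

lemma norm_lincomb3_le_sum:
  fixes A B C :: complex
  assumes "0 \<le> a" "a \<le> d" "0 \<le> b" "b \<le> d" "0 \<le> c" "c \<le> d"
  shows "cmod (of_real a * A + of_real b * B + of_real c * C) \<le> d * (cmod A + cmod B + cmod C)"
  using norm_lincomb3_le[of a d 1 b 1 c 1 A B C] assms by simp

lemma triple_root_solution_weighted:
  "of_real (a\<^sup>2) * triple_root_solution a t A0 A1 A2
     = of_real (a\<^sup>2 * triple_root_kernel0 a t) * A0 + of_real (a\<^sup>2 * triple_root_kernel1 a t) * A1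
       + of_real (a\<^sup>2 * triple_root_kernel2 a t) * A2"
  by (simp add: triple_root_solution_def algebra_simps)

lemma triple_root_kernels_nonneg:
  assumes "a \<ge> 0" "t \<ge> 0"
  shows "0 \<le> triple_root_kernel0 a t" "0 \<le> triple_root_kernel1 a t" "0 \<le> triple_root_kernel2 a t"
  using assms by (simp_all add: triple_root_kernel0_def triple_root_kernel1_def triple_root_kernel2_def)

lemma triple_root_solution_small_time:
  fixes A0 A1 A2 :: complex
  assumes "a \<ge> 0" "0 \<le> t" "t \<le> 1"
  defines "B \<equiv> damped_quartic (a * t) * (max 1 (a\<^sup>2) * cmod A0 + max 1 a * cmod A1 + cmod A2)"
  shows "cmod (triple_root_solution a t A0 A1 A2) \<le> B"
    and "cmod (of_real (a\<^sup>2) * triple_root_solution a t A0 A1 A2) \<le> B"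
    and "cmod (triple_root_solution a t A0 A1 0) \<le> B"
    and "cmod (of_real (a\<^sup>2) * triple_root_solution a t A0 A1 0) \<le> B"
proof -
  define G where "G = damped_quartic (a * t)"
  define W where "W A = max 1 (a\<^sup>2) * cmod A0 + max 1 a * cmod A1 + cmod A" for A :: complex
  note k = triple_root_kernel_bounds[OF assms(1,2), folded G_def]
  note k0 = triple_root_kernels_nonneg[OF assms(1,2)]
  have G: "0 \<le> G" unfolding G_def by (rule damped_quartic_nonneg)
  have Gx: "G \<le> G * x" if "1 \<le> x" for x
    using mult_left_mono[OF that G] by simp
  have tG: "t * G \<le> G" "t\<^sup>2 * G \<le> G"
    using assms G by (auto intro: mult_left_le_one_le power_le_one)
  have c: "triple_root_kernel0 a t \<le> G * max 1 (a\<^sup>2)" "triple_root_kernel1 a t \<le> G * max 1 a"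
      "triple_root_kernel2 a t \<le> G * 1"
    using k(1-3) tG Gx[of "max 1 (a\<^sup>2)"] Gx[of "max 1 a"] by auto
  have ca: "a\<^sup>2 * triple_root_kernel0 a t \<le> G * max 1 (a\<^sup>2)"
    using mult_left_mono[OF k(1), of "a\<^sup>2"] mult_left_mono[OF max.cobounded2[of "a\<^sup>2" 1] G]
    by (simp add: mult.commute)
  have cb: "a\<^sup>2 * triple_root_kernel1 a t \<le> G * max 1 a"
    using mult_left_mono[OF k(4) \<open>a \<ge> 0\<close>] mult_left_mono[OF max.cobounded2[of a 1] G]
    by (simp add: power2_eq_square mult.assoc mult.commute)
  have cc: "a\<^sup>2 * triple_root_kernel2 a t \<le> G * 1"
    using k(5) by simp
  have sol: "cmod (triple_root_solution a t A0 A1 A) \<le> G * W A" for A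
    using norm_lincomb3_le[OF k0(1) c(1) k0(2) c(2) k0(3) c(3)]
    by (simp add: triple_root_solution_def W_def)
  have wsol: "cmod (of_real (a\<^sup>2) * triple_root_solution a t A0 A1 A) \<le> G * W A" for A
    unfolding triple_root_solution_weighted
    using norm_lincomb3_le[OF _ ca _ cb _ cc] k0 by (simp add: W_def)
  have "G * W 0 \<le> G * W A2" "G * W A2 = B"
    using G by (simp_all add: W_def B_def G_def mult_left_mono)
  then show "cmod (triple_root_solution a t A0 A1 A2) \<le> B"
    and "cmod (of_real (a\<^sup>2) * triple_root_solution a t A0 A1 A2) \<le> B"
    and "cmod (triple_root_solution a t A0 A1 0) \<le> B"
    and "cmod (of_real (a\<^sup>2) * triple_root_solution a t A0 A1 0) \<le> B"
    using sol[of A2] wsol[of A2] sol[of 0] wsol[of 0] by linarith+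
qed

lemma triple_root_solution_large_time:
  fixes A0 A1 A2 :: complex
  assumes "a \<ge> 0" "1 \<le> t"
  defines "S \<equiv> damped_quartic (a * t) * (cmod A0 + cmod A1 + cmod A2)"
  shows "cmod (triple_root_solution a t A0 A1 A2) \<le> t powr 2 * S"
    and "cmod (of_real (a\<^sup>2) * triple_root_solution a t A0 A1 A2) \<le> t powr 0 * S"
    and "cmod (triple_root_solution a t A0 A1 0) \<le> t powr 1 * S"
    and "cmod (of_real (a\<^sup>2) * triple_root_solution a t A0 A1 0) \<le> t powr -1 * S"
proof -
  define G where "G = damped_quartic (a * t)"
  have t: "0 \<le> t" "0 < t" using assms by auto
  note k = triple_root_kernel_bounds[OF assms(1) t(1), folded G_def]
  note k0 = triple_root_kernels_nonneg[OF assms(1) t(1)]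
  have G: "0 \<le> G" unfolding G_def by (rule damped_quartic_nonneg)
  have ak: "0 \<le> a\<^sup>2 * triple_root_kernel0 a t" "0 \<le> a\<^sup>2 * triple_root_kernel1 a t"
      "0 \<le> a\<^sup>2 * triple_root_kernel2 a t"
    using k0 by simp_all
  have up: "x \<le> t * x" "x \<le> t\<^sup>2 * x" if "0 \<le> x" for x
    using assms that by (auto intro: mult_le_cancel_right1[THEN iffD2] one_le_power)
  have "cmod (triple_root_solution a t A0 A1 A2) \<le> (t\<^sup>2 * G) * (cmod A0 + cmod A1 + cmod A2)"
    unfolding triple_root_solution_def
    by (rule norm_lincomb3_le_sum)
       (use k k0 G up[of G] up[of "t * G"] in \<open>auto simp: power2_eq_square mult.assoc\<close>)
  then show "cmod (triple_root_solution a t A0 A1 A2) \<le> t powr 2 * S"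
    using t by (simp add: S_def G_def mult.assoc)
  have "cmod (of_real (a\<^sup>2) * triple_root_solution a t A0 A1 A2) \<le> G * (cmod A0 + cmod A1 + cmod A2)"
    unfolding triple_root_solution_weighted
    by (rule norm_lincomb3_le_sum)
       (use ak k(5-7) up(2)[OF ak(1)] up(1)[OF ak(2)] in \<open>auto simp: mult.assoc\<close>)
  then show "cmod (of_real (a\<^sup>2) * triple_root_solution a t A0 A1 A2) \<le> t powr 0 * S"
    using t by (simp add: S_def G_def)
  have drop: "triple_root_solution a t A0 A1 0
      = of_real (triple_root_kernel0 a t) * A0 + of_real (triple_root_kernel1 a t) * A1 + of_real 0 * A2"
    by (simp add: triple_root_solution_def)
  have "cmod (triple_root_solution a t A0 A1 0) \<le> (t * G) * (cmod A0 + cmod A1 + cmod A2)"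
    unfolding drop
    by (rule norm_lincomb3_le_sum) (use k k0 G up[of G] t in auto)
  then show "cmod (triple_root_solution a t A0 A1 0) \<le> t powr 1 * S"
    using t by (simp add: S_def G_def mult.assoc)
  have weighted_drop: "of_real (a\<^sup>2) * triple_root_solution a t A0 A1 0
      = of_real (a\<^sup>2 * triple_root_kernel0 a t) * A0 + of_real (a\<^sup>2 * triple_root_kernel1 a t) * A1
        + of_real 0 * A2"
    by (simp add: triple_root_solution_def algebra_simps)
  have "t * (a\<^sup>2 * triple_root_kernel0 a t) \<le> G"
    using k(6) mult_left_mono[OF up(1)[OF ak(1)] t(1)]
    by (simp add: power2_eq_square mult.assoc)
  then have "cmod (of_real (a\<^sup>2) * triple_root_solution a t A0 A1 0) \<le> (G / t) * (cmod A0 + cmod A1 + cmod A2)"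
    unfolding weighted_drop
    by (intro norm_lincomb3_le_sum) (use ak k(7) t G in \<open>auto simp: pos_le_divide_eq mult.commute\<close>)
  then show "cmod (of_real (a\<^sup>2) * triple_root_solution a t A0 A1 0) \<le> t powr -1 * S"
    using t by (simp add: S_def G_def powr_minus divide_inverse mult_ac)
qed

lemma triple_root_solution_third_datum:
  assumes "a \<ge> 0" "t \<ge> 0"
  shows "cmod (of_real (a\<^sup>2) * triple_root_solution a t 0 0 A2) \<le> 8 ^ 4 * cmod A2"
proof -
  have "cmod (of_real (a\<^sup>2) * triple_root_solution a t 0 0 A2) = a\<^sup>2 * triple_root_kernel2 a t * cmod A2"
    using triple_root_kernels_nonneg[OF assms]
    by (simp add: triple_root_solution_def norm_mult norm_power)
  also have "\<dots> \<le> 8 ^ 4 * cmod A2"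
    using triple_root_kernel_bounds(5)[OF assms] damped_quartic_le_const[of "a * t"] assms
    by (intro mult_right_mono) auto
  finally show ?thesis .
qed

text \<open>Here \<open>G a A0 A1 A2\<close> is a multiplier evaluated at the damping rate \<open>a\<close> and at the values
  \<open>A\<^sub>k\<close> of the transformed data. The weights \<open>max 1 (a\<^sup>2)\<close> and \<open>max 1 a\<close> for \<open>t \<le> 1\<close> are
  absorbed by the Sobolev weights of \<^const>\<open>B_norm\<close>; the factor \<open>t powr r\<close> for \<open>t \<ge> 1\<close> shifts the
  \<open>L\<^sup>2\<close> decay rate \<open>3 n / (4 \<sigma>)\<close> of \<open>exp (- a t / 2)\<close>.\<close>

definition multiplier_bound ::
    "real \<Rightarrow> real \<Rightarrow> (real \<Rightarrow> complex \<Rightarrow> complex \<Rightarrow> complex \<Rightarrow> complex) \<Rightarrow> bool" where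
  "multiplier_bound r t G \<longleftrightarrow>
     (t \<le> 1 \<longrightarrow> (\<forall>a A0 A1 A2. 0 \<le> a \<longrightarrow> cmod (G a A0 A1 A2)
        \<le> damped_quartic (a * t) * (max 1 (a\<^sup>2) * cmod A0 + max 1 a * cmod A1 + cmod A2))) \<and>
     (1 \<le> t \<longrightarrow> (\<forall>a A0 A1 A2. 0 \<le> a \<longrightarrow>
        cmod (G a A0 A1 A2) \<le> t powr r * (damped_quartic (a * t) * (cmod A0 + cmod A1 + cmod A2))))"

lemma triple_root_multiplier_bounds:
  assumes "0 \<le> t"
  shows "multiplier_bound 2 t (\<lambda>a A0 A1 A2. triple_root_solution a t A0 A1 A2)"
    and "multiplier_bound 0 t (\<lambda>a A0 A1 A2. of_real (a\<^sup>2) * triple_root_solution a t A0 A1 A2)"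
    and "multiplier_bound 1 t (\<lambda>a A0 A1 A2. triple_root_solution a t A0 A1 0)"
    and "multiplier_bound (-1) t (\<lambda>a A0 A1 A2. of_real (a\<^sup>2) * triple_root_solution a t A0 A1 0)"
  using triple_root_solution_small_time[OF _ assms] triple_root_solution_large_time
  unfolding multiplier_bound_def by auto

section \<open>\<open>L\<^sup>2\<close> bounds on the Fourier side\<close>

lemma L2norm_nonneg: "0 \<le> L2norm f"
  by (simp add: L2norm_def)

lemma L2norm_le_sqrt_integral:
  fixes F :: "real^'n \<Rightarrow> complex"
  assumes G: "integrable lborel G" and le: "\<And>\<xi>. (cmod (F \<xi>))\<^sup>2 \<le> G \<xi>"
  shows "L2norm F \<le> sqrt (\<integral>\<xi>. G \<xi> \<partial>lborel)"
proof (cases "integrable lborel (\<lambda>\<xi>. (cmod (F \<xi>))\<^sup>2)")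
  case True
  then show ?thesis
    unfolding L2norm_def using G le by (simp add: integral_mono)
next
  case False
  have "0 \<le> (\<integral>\<xi>. G \<xi> \<partial>lborel)"
    using le by (intro integral_nonneg_AE) (auto intro: order_trans[OF zero_le_power2])
  then show ?thesis
    unfolding L2norm_def using False by (simp add: not_integrable_integral_eq)
qed

lemma square_sum3_le:
  fixes x y z :: real
  shows "(x + y + z)\<^sup>2 \<le> 3 * (x\<^sup>2 + y\<^sup>2 + z\<^sup>2)"
proof -
  have "3 * (x\<^sup>2 + y\<^sup>2 + z\<^sup>2) - (x + y + z)\<^sup>2 = (x - y)\<^sup>2 + (y - z)\<^sup>2 + (x - z)\<^sup>2"
    by (simp add: power2_eq_square algebra_simps)
  then show ?thesis
    using zero_le_power2[of "x - y"] zero_le_power2[of "y - z"] zero_le_power2[of "x - z"] by linarith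
qed

lemma L2norm_le_sum3:
  fixes F W0 W1 W2 :: "real^'n \<Rightarrow> complex"
  assumes sq: "integrable lborel (\<lambda>\<xi>. (cmod (W0 \<xi>))\<^sup>2)" "integrable lborel (\<lambda>\<xi>. (cmod (W1 \<xi>))\<^sup>2)"
      "integrable lborel (\<lambda>\<xi>. (cmod (W2 \<xi>))\<^sup>2)"
    and "K \<ge> 0"
    and le: "\<And>\<xi>. cmod (F \<xi>) \<le> K * (cmod (W0 \<xi>) + cmod (W1 \<xi>) + cmod (W2 \<xi>))"
  shows "L2norm F \<le> sqrt 3 * K * (L2norm W0 + L2norm W1 + L2norm W2)"
proof -
  define X where "X W = (\<integral>\<xi>. (cmod (W \<xi>))\<^sup>2 \<partial>lborel)" for W :: "real^'n \<Rightarrow> complex"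
  have X: "0 \<le> X W" "L2norm W = sqrt (X W)" for W
    unfolding X_def L2norm_def by simp_all
  have "L2norm F \<le> sqrt (\<integral>\<xi>. 3 * K\<^sup>2 * ((cmod (W0 \<xi>))\<^sup>2 + (cmod (W1 \<xi>))\<^sup>2 + (cmod (W2 \<xi>))\<^sup>2) \<partial>lborel)"
  proof (rule L2norm_le_sqrt_integral)
    show "integrable lborel (\<lambda>\<xi>. 3 * K\<^sup>2 * ((cmod (W0 \<xi>))\<^sup>2 + (cmod (W1 \<xi>))\<^sup>2 + (cmod (W2 \<xi>))\<^sup>2))"
      using sq by simp
    fix \<xi>
    have "(cmod (F \<xi>))\<^sup>2 \<le> K\<^sup>2 * (cmod (W0 \<xi>) + cmod (W1 \<xi>) + cmod (W2 \<xi>))\<^sup>2"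
      using power_mono[OF le[of \<xi>] norm_ge_zero, where n = 2] by (simp add: power_mult_distrib)
    also have "\<dots> \<le> K\<^sup>2 * (3 * ((cmod (W0 \<xi>))\<^sup>2 + (cmod (W1 \<xi>))\<^sup>2 + (cmod (W2 \<xi>))\<^sup>2))"
      by (intro mult_left_mono square_sum3_le) simp
    finally show "(cmod (F \<xi>))\<^sup>2 \<le> 3 * K\<^sup>2 * ((cmod (W0 \<xi>))\<^sup>2 + (cmod (W1 \<xi>))\<^sup>2 + (cmod (W2 \<xi>))\<^sup>2)"
      by (simp add: algebra_simps)
  qed
  also have "\<dots> = sqrt 3 * K * sqrt (X W0 + X W1 + X W2)"
    using sq \<open>K \<ge> 0\<close> by (simp add: X_def real_sqrt_mult)
  also have "\<dots> \<le> sqrt 3 * K * (L2norm W0 + L2norm W1 + L2norm W2)"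
    using X \<open>K \<ge> 0\<close> sqrt_add_le_add_sqrt[of "X W0 + X W1" "X W2"] sqrt_add_le_add_sqrt[of "X W0" "X W1"]
    by (intro mult_left_mono) auto
  finally show ?thesis .
qed

lemma summable_exp_neg_mult_powr:
  "summable (\<lambda>k::nat. exp (- real k) * (real k + 1) powr m)"
proof (rule summable_comparison_test_bigo)
  show "summable (\<lambda>k::nat. norm (real k powr (-2)))"
    using summable_real_powr_iff[of "-2"] by simp
  show "(\<lambda>k::nat. exp (- real k) * (real k + 1) powr m) \<in> O(\<lambda>k. real k powr (-2))"
    by real_asymp
qed

text \<open>Layer-cake domination: where \<open>k \<le> |\<xi>|\<^sup>\<beta> t < k + 1\<close>, the kernel is at most \<open>e\<^sup>-\<^sup>k\<close>.\<close>

lemma exp_neg_norm_powr_le_layers: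
  fixes \<xi> :: "'a::real_normed_vector"
  assumes "\<beta> > 0" "t > 0"
  shows "ennreal (exp (- (norm \<xi> powr \<beta> * t)))
     \<le> (\<Sum>k. ennreal (exp (- real k)) * indicator (cball 0 (((real k + 1) / t) powr (1 / \<beta>))) \<xi>)"
proof -
  define layer where
    "layer k = ennreal (exp (- real k)) * indicator (cball 0 (((real k + 1) / t) powr (1 / \<beta>))) \<xi>"
    for k :: nat
  define j where "j = nat \<lfloor>norm \<xi> powr \<beta> * t\<rfloor>"
  have j: "real j \<le> norm \<xi> powr \<beta> * t" "norm \<xi> powr \<beta> * t < real j + 1"
    using assms unfolding j_def by auto
  have "norm \<xi> = (norm \<xi> powr \<beta>) powr (1 / \<beta>)"
    using assms by (simp add: powr_powr)
  also have "\<dots> \<le> ((real j + 1) / t) powr (1 / \<beta>)"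
    using j assms by (intro powr_mono2) (auto simp: pos_le_divide_eq less_imp_le)
  finally have "layer j = ennreal (exp (- real j))"
    by (simp add: layer_def)
  then have "ennreal (exp (- (norm \<xi> powr \<beta> * t))) \<le> layer j"
    using j by simp
  also have "layer j \<le> suminf layer"
    using sum_le_suminf[OF summableI, of "{j}" layer] by simp
  finally show ?thesis
    unfolding layer_def[abs_def] .
qed

definition exp_norm_powr_const :: "real \<Rightarrow> nat \<Rightarrow> real" where
  "exp_norm_powr_const \<beta> n = unit_ball_vol (real n) * (\<Sum>k. exp (- real k) * (real k + 1) powr (real n / \<beta>))"

lemma exp_norm_powr_const_nonneg: "0 \<le> exp_norm_powr_const \<beta> n"
  unfolding exp_norm_powr_const_def
  by (intro mult_nonneg_nonneg suminf_nonneg summable_exp_neg_mult_powr) auto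

lemma exp_neg_norm_powr_integral_bound:
  fixes \<beta> t :: real
  assumes "\<beta> > 0" "t > 0"
  shows "integrable lborel (\<lambda>\<xi>::real^'n. exp (- (norm \<xi> powr \<beta> * t)))"
    and "(\<integral>\<xi>. exp (- (norm (\<xi>::real^'n) powr \<beta> * t)) \<partial>lborel)
           \<le> exp_norm_powr_const \<beta> CARD('n) * t powr (- real CARD('n) / \<beta>)"
proof -
  define m where "m = real CARD('n) / \<beta>"
  define R where "R k = ((real k + 1) / t) powr (1 / \<beta>)" for k :: nat
  define c where "c = unit_ball_vol (real CARD('n)) * t powr (- real CARD('n) / \<beta>)"
  have c: "c \<ge> 0" by (simp add: c_def)
  have summable: "summable (\<lambda>k. exp (- real k) * c * (real k + 1) powr m)"
    using summable_mult[OF summable_exp_neg_mult_powr, of c m] by (simp add: mult_ac)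
  have ball: "(\<integral>\<^sup>+\<xi>. ennreal (exp (- real k)) * indicator (cball (0::real^'n) (R k)) \<xi> \<partial>lborel)
      = ennreal (exp (- real k) * c * (real k + 1) powr m)" for k
  proof -
    have "R k ^ CARD('n) = (real k + 1) powr m * t powr (- real CARD('n) / \<beta>)"
      using assms unfolding R_def m_def
      by (simp add: powr_power powr_divide powr_minus_divide divide_simps)
    then show ?thesis
      using c by (simp add: nn_integral_cmult_indicator emeasure_cball R_def c_def
          ennreal_mult'[symmetric] mult_ac)
  qed
  have "(\<integral>\<^sup>+\<xi>. ennreal (exp (- (norm \<xi> powr \<beta> * t))) \<partial>(lborel :: (real^'n) measure))
      \<le> (\<integral>\<^sup>+\<xi>. (\<Sum>k. ennreal (exp (- real k)) * indicator (cball (0::real^'n) (R k)) \<xi>) \<partial>lborel)"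
    unfolding R_def by (intro nn_integral_mono exp_neg_norm_powr_le_layers assms)
  also have "\<dots> = (\<Sum>k. \<integral>\<^sup>+\<xi>. ennreal (exp (- real k)) * indicator (cball (0::real^'n) (R k)) \<xi> \<partial>lborel)"
    by (intro nn_integral_suminf borel_measurable_times_ennreal borel_measurable_indicator) simp_all
  also have "\<dots> = (\<Sum>k. ennreal (exp (- real k) * c * (real k + 1) powr m))"
    by (simp only: ball)
  also have "\<dots> = ennreal (\<Sum>k. exp (- real k) * c * (real k + 1) powr m)"
    by (rule suminf_ennreal2[OF _ summable]) (simp add: c)
  also have "(\<Sum>k. exp (- real k) * c * (real k + 1) powr m)
      = exp_norm_powr_const \<beta> CARD('n) * t powr (- real CARD('n) / \<beta>)"
    using suminf_mult[OF summable_exp_neg_mult_powr, of c m]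
    by (simp add: exp_norm_powr_const_def c_def m_def ac_simps)
  finally have nn: "(\<integral>\<^sup>+\<xi>. ennreal (exp (- (norm \<xi> powr \<beta> * t))) \<partial>(lborel :: (real^'n) measure))
      \<le> ennreal (exp_norm_powr_const \<beta> CARD('n) * t powr (- real CARD('n) / \<beta>))" .
  show "integrable lborel (\<lambda>\<xi>::real^'n. exp (- (norm \<xi> powr \<beta> * t)))"
    using nn by (intro integrableI_nonneg) (auto simp: top.not_eq_extremum intro: le_less_trans)
  then show "(\<integral>\<xi>. exp (- (norm (\<xi>::real^'n) powr \<beta> * t)) \<partial>lborel)
      \<le> exp_norm_powr_const \<beta> CARD('n) * t powr (- real CARD('n) / \<beta>)"
    using nn exp_norm_powr_const_nonneg by (simp add: integral_eq_nn_integral enn2real_leI)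
qed

lemma L2norm_le_exp_norm_powr:
  fixes F :: "real^'n \<Rightarrow> complex"
  assumes "\<beta> > 0" "t > 0" and F: "\<And>\<xi>. cmod (F \<xi>) \<le> M * exp (- (norm \<xi> powr \<beta> * t) / 2)"
  shows "L2norm F \<le> M * sqrt (exp_norm_powr_const \<beta> CARD('n)) * t powr (- real CARD('n) / (2 * \<beta>))"
proof -
  note kernel = exp_neg_norm_powr_integral_bound[OF assms(1,2), where 'n='n]
  have "0 \<le> M * exp (- (norm (0::real^'n) powr \<beta> * t) / 2)"
    using F norm_ge_zero order_trans by blast
  then have "M \<ge> 0"
    by (simp add: zero_le_mult_iff)
  have "L2norm F \<le> sqrt (\<integral>\<xi>. M\<^sup>2 * exp (- (norm (\<xi>::real^'n) powr \<beta> * t)) \<partial>lborel)"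
  proof (rule L2norm_le_sqrt_integral)
    show "integrable lborel (\<lambda>\<xi>::real^'n. M\<^sup>2 * exp (- (norm \<xi> powr \<beta> * t)))"
      using kernel(1) by simp
    show "(cmod (F \<xi>))\<^sup>2 \<le> M\<^sup>2 * exp (- (norm \<xi> powr \<beta> * t))" for \<xi>
      using power_mono[OF F[of \<xi>] norm_ge_zero, where n = 2]
      by (simp add: power_mult_distrib flip: exp_of_nat_mult)
  qed
  also have "\<dots> \<le> sqrt (M\<^sup>2 * (exp_norm_powr_const \<beta> CARD('n) * t powr (- real CARD('n) / \<beta>)))"
    using kernel(2) by (simp add: mult_left_mono)
  also have "\<dots> = M * sqrt (exp_norm_powr_const \<beta> CARD('n)) * t powr (- real CARD('n) / (2 * \<beta>))"
    using \<open>M \<ge> 0\<close> \<open>t > 0\<close> powr_half_sqrt_powr[of t "- real CARD('n) / \<beta>"]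
    by (simp add: real_sqrt_mult mult.commute)
  finally show ?thesis .
qed

section \<open>Decay estimates for the solution\<close>

lemma one_le_two_powr_mult_one_plus_powr:
  fixes q t :: real
  assumes "0 \<le> t" "t \<le> 1"
  shows "1 \<le> 2 powr \<bar>q\<bar> * (1 + t) powr (- q)"
proof (cases "q \<ge> 0")
  case True
  have "(1 + t) powr q \<le> 2 powr q"
    using assms True by (intro powr_mono2) auto
  then show ?thesis
    using True assms by (simp add: powr_minus field_simps)
next
  case False
  have "1 \<le> (1 + t) powr (- q)"
    using assms False by (intro ge_one_powr_ge_zero) auto
  moreover have "1 \<le> 2 powr \<bar>q\<bar>"
    by (rule ge_one_powr_ge_zero) auto
  ultimately show ?thesis
    using mult_mono[of 1 "2 powr \<bar>q\<bar>" 1 "(1 + t) powr (- q)"] by simp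
qed

lemma powr_le_two_powr_mult_one_plus_powr:
  fixes q t :: real
  assumes "1 \<le> t"
  shows "t powr (- q) \<le> 2 powr \<bar>q\<bar> * (1 + t) powr (- q)"
proof (cases "q \<ge> 0")
  case True
  have "(1 / t) powr q \<le> (2 / (1 + t)) powr q"
    using assms True by (intro powr_mono2) (auto simp: field_simps)
  then show ?thesis
    using assms True by (simp add: powr_divide powr_minus_divide)
next
  case False
  have "t powr (- q) \<le> (1 + t) powr (- q)"
    using assms False by (intro powr_mono2) auto
  moreover have "1 \<le> 2 powr \<bar>q\<bar>"
    by (rule ge_one_powr_ge_zero) auto
  ultimately show ?thesis
    using mult_mono[of 1 "2 powr \<bar>q\<bar>" "t powr (- q)" "(1 + t) powr (- q)"] by simp
qed

lemma powr_power_nonneg: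
  fixes x e :: real
  assumes "0 \<le> x" "n \<noteq> 0"
  shows "(x powr e) ^ n = x powr (real n * e)"
  using assms by (cases "x = 0") (simp_all add: powr_power)

lemma max_one_norm_powr_le:
  fixes \<xi> :: "'a::real_normed_vector"
  assumes "0 \<le> e"
  shows "max 1 (norm \<xi> powr (2 * e)) \<le> (1 + (norm \<xi>)\<^sup>2) powr e"
proof -
  have "norm \<xi> powr (2 * e) = ((norm \<xi>)\<^sup>2) powr e"
    by (cases "\<xi> = 0") (simp_all add: powr_powr[symmetric] powr_numeral)
  also have "\<dots> \<le> (1 + (norm \<xi>)\<^sup>2) powr e"
    using assms by (intro powr_mono2) auto
  finally show ?thesis
    using assms by (simp add: ge_one_powr_ge_zero)
qed

lemma norm_inh_weight: "cmod (inh_weight s f \<xi>) = (1 + (norm \<xi>)\<^sup>2) powr (s / 2) * cmod (f \<xi>)"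
  by (simp add: inh_weight_def norm_mult)

lemma norm_fourier_le_L1norm: "cmod (fourier f \<xi>) \<le> L1norm f"
  unfolding fourier_def L1norm_def
  using integral_norm_bound[of lborel "\<lambda>x. cis (- (x \<bullet> \<xi>)) * f x"] by (simp add: norm_mult)

lemma B_norm_nonneg: "0 \<le> B_norm \<sigma> v0 v1 v2"
  unfolding B_norm_def Hs_L1_norm_def L2norm_def L1norm_def
  by (intro add_nonneg_nonneg real_sqrt_ge_zero integral_nonneg_AE) auto

definition damping_rate :: "real \<Rightarrow> 'a::real_normed_vector \<Rightarrow> real" where
  "damping_rate \<sigma> \<xi> = norm \<xi> powr (2 * \<sigma> / 3)"

lemma damping_rate_nonneg: "0 \<le> damping_rate \<sigma> \<xi>"
  by (simp add: damping_rate_def)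

lemma max_one_damping_rate_le:
  assumes "\<sigma> > 0"
  shows "max 1 ((damping_rate \<sigma> \<xi>)\<^sup>2) \<le> (1 + (norm \<xi>)\<^sup>2) powr ((4 * \<sigma> / 3) / 2)"
    and "max 1 (damping_rate \<sigma> \<xi>) \<le> (1 + (norm \<xi>)\<^sup>2) powr ((2 * \<sigma> / 3) / 2)"
  using max_one_norm_powr_le[of "(4 * \<sigma> / 3) / 2" \<xi>] max_one_norm_powr_le[of "(2 * \<sigma> / 3) / 2" \<xi>] assms
  by (simp_all add: damping_rate_def powr_power_nonneg)

lemma L2norm_small_time:
  fixes F :: "real^'n \<Rightarrow> complex"
  assumes "\<sigma> > 0" and B: "in_B \<sigma> v0 v1 v2" and "0 \<le> t"
    and F: "\<And>\<xi>. cmod (F \<xi>) \<le> damped_quartic (damping_rate \<sigma> \<xi> * t)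
      * (max 1 ((damping_rate \<sigma> \<xi>)\<^sup>2) * cmod (fourier v0 \<xi>)
         + max 1 (damping_rate \<sigma> \<xi>) * cmod (fourier v1 \<xi>) + cmod (fourier v2 \<xi>))"
  shows "L2norm F \<le> sqrt 3 * 8 ^ 4 * B_norm \<sigma> v0 v1 v2"
proof -
  define W0 where "W0 = inh_weight (4 * \<sigma> / 3) (fourier v0)"
  define W1 where "W1 = inh_weight (2 * \<sigma> / 3) (fourier v1)"
  define W2 where "W2 = inh_weight 0 (fourier v2)"
  have sq: "integrable lborel (\<lambda>\<xi>. (cmod (W0 \<xi>))\<^sup>2)" "integrable lborel (\<lambda>\<xi>. (cmod (W1 \<xi>))\<^sup>2)"
      "integrable lborel (\<lambda>\<xi>. (cmod (W2 \<xi>))\<^sup>2)"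
    using B unfolding in_B_def in_Hs_L1_def sq_int_def W0_def W1_def W2_def by auto
  have "cmod (F \<xi>) \<le> 8 ^ 4 * (cmod (W0 \<xi>) + cmod (W1 \<xi>) + cmod (W2 \<xi>))" for \<xi>
  proof -
    have "cmod (F \<xi>) \<le> 8 ^ 4 * (max 1 ((damping_rate \<sigma> \<xi>)\<^sup>2) * cmod (fourier v0 \<xi>)
        + max 1 (damping_rate \<sigma> \<xi>) * cmod (fourier v1 \<xi>) + cmod (fourier v2 \<xi>))"
      using F[of \<xi>] damped_quartic_le_const[of "damping_rate \<sigma> \<xi> * t"] \<open>0 \<le> t\<close>
      by (elim order_trans, intro mult_right_mono) (auto simp: damping_rate_nonneg)
    also have "\<dots> \<le> 8 ^ 4 * (cmod (W0 \<xi>) + cmod (W1 \<xi>) + cmod (W2 \<xi>))"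
      using max_one_damping_rate_le[OF \<open>\<sigma> > 0\<close>, of \<xi>]
      by (auto simp: W0_def W1_def W2_def norm_inh_weight intro!: add_mono mult_right_mono)
    finally show ?thesis .
  qed
  then have "L2norm F \<le> sqrt 3 * 8 ^ 4 * (L2norm W0 + L2norm W1 + L2norm W2)"
    by (intro L2norm_le_sum3[OF sq]) auto
  also have "\<dots> \<le> sqrt 3 * 8 ^ 4 * B_norm \<sigma> v0 v1 v2"
    unfolding B_norm_def Hs_L1_norm_def W0_def W1_def W2_def L1norm_def
    by (intro mult_left_mono) (auto intro!: integral_nonneg_AE)
  finally show ?thesis .
qed

lemma L2norm_large_time:
  fixes F :: "real^'n \<Rightarrow> complex"
  assumes "\<sigma> > 0" "1 \<le> t"
    and F: "\<And>\<xi>. cmod (F \<xi>) \<le> t powr r * (damped_quartic (damping_rate \<sigma> \<xi> * t)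
      * (cmod (fourier v0 \<xi>) + cmod (fourier v1 \<xi>) + cmod (fourier v2 \<xi>)))"
  shows "L2norm F \<le> 8 ^ 4 * sqrt (exp_norm_powr_const (2 * \<sigma> / 3) CARD('n))
    * t powr (r - 3 * real CARD('n) / (4 * \<sigma>)) * B_norm \<sigma> v0 v1 v2"
proof -
  define K where "K = sqrt (exp_norm_powr_const (2 * \<sigma> / 3) CARD('n))"
  define L where "L = L1norm v0 + L1norm v1 + L1norm v2"
  have L: "0 \<le> L" "L \<le> B_norm \<sigma> v0 v1 v2"
    unfolding L_def B_norm_def Hs_L1_norm_def L1norm_def L2norm_def
    by (auto intro!: add_nonneg_nonneg integral_nonneg_AE)
  have "cmod (F \<xi>) \<le> (t powr r * 8 ^ 4 * L) * exp (- (norm \<xi> powr (2 * \<sigma> / 3) * t) / 2)" for \<xi>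
  proof -
    have "cmod (F \<xi>) \<le> t powr r * (damped_quartic (damping_rate \<sigma> \<xi> * t)
        * (cmod (fourier v0 \<xi>) + cmod (fourier v1 \<xi>) + cmod (fourier v2 \<xi>)))"
      by (rule F)
    also have "\<dots> \<le> t powr r * ((8 ^ 4 * exp (- (damping_rate \<sigma> \<xi> * t) / 2)) * L)"
      unfolding L_def using \<open>1 \<le> t\<close>
      by (intro mult_left_mono mult_mono damped_quartic_le_exp_half add_mono norm_fourier_le_L1norm)
         (simp_all add: damping_rate_nonneg)
    also have "\<dots> = (t powr r * 8 ^ 4 * L) * exp (- (norm \<xi> powr (2 * \<sigma> / 3) * t) / 2)"
      by (simp add: damping_rate_def ac_simps)
    finally show ?thesis .
  qed
  then have "L2norm F \<le> (t powr r * 8 ^ 4 * L) * K * t powr (- real CARD('n) / (2 * (2 * \<sigma> / 3)))"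
    unfolding K_def using assms by (intro L2norm_le_exp_norm_powr) auto
  also have "\<dots> = 8 ^ 4 * K * (t powr r * t powr (- real CARD('n) / (2 * (2 * \<sigma> / 3)))) * L"
    by (simp add: ac_simps)
  also have "\<dots> = 8 ^ 4 * K * t powr (r - 3 * real CARD('n) / (4 * \<sigma>)) * L"
    unfolding powr_add[symmetric] by (simp add: field_simps)
  also have "\<dots> \<le> 8 ^ 4 * K * t powr (r - 3 * real CARD('n) / (4 * \<sigma>)) * B_norm \<sigma> v0 v1 v2"
    using L exp_norm_powr_const_nonneg by (intro mult_left_mono) (auto simp: K_def)
  finally show ?thesis
    by (simp add: K_def)
qed

definition decay_const :: "real \<Rightarrow> nat \<Rightarrow> real" where
  "decay_const \<sigma> n = (sqrt 3 + sqrt (exp_norm_powr_const (2 * \<sigma> / 3) n)) * 8 ^ 4 * 2 powr (3 * real n / (4 * \<sigma>) + 2)"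

lemma decay_const_ge:
  assumes "\<sigma> > 0" "\<bar>r\<bar> \<le> 2"
  shows "(sqrt 3 + sqrt (exp_norm_powr_const (2 * \<sigma> / 3) n)) * 8 ^ 4 * 2 powr \<bar>3 * real n / (4 * \<sigma>) - r\<bar>
    \<le> decay_const \<sigma> n"
proof -
  have "0 \<le> 3 * real n / (4 * \<sigma>)"
    using assms by simp
  then have "\<bar>3 * real n / (4 * \<sigma>) - r\<bar> \<le> 3 * real n / (4 * \<sigma>) + 2"
    using assms by linarith
  then have "2 powr \<bar>3 * real n / (4 * \<sigma>) - r\<bar> \<le> 2 powr (3 * real n / (4 * \<sigma>) + 2)"
    by (rule powr_mono) simp
  then show ?thesis
    unfolding decay_const_def using exp_norm_powr_const_nonneg by (intro mult_left_mono) auto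
qed

lemma L2norm_decay_of_multiplier_bound:
  fixes v0 v1 v2 :: "real^'n \<Rightarrow> complex"
  assumes "\<sigma> > 0" and B: "in_B \<sigma> v0 v1 v2" and "\<bar>r\<bar> \<le> 2" "0 \<le> t" and G: "multiplier_bound r t G"
  shows "L2norm (\<lambda>\<xi>. G (damping_rate \<sigma> \<xi>) (fourier v0 \<xi>) (fourier v1 \<xi>) (fourier v2 \<xi>))
    \<le> decay_const \<sigma> CARD('n) * (1 + t) powr (r - 3 * real CARD('n) / (4 * \<sigma>)) * B_norm \<sigma> v0 v1 v2"
    (is "?L \<le> _")
proof -
  define p where "p = 3 * real CARD('n) / (4 * \<sigma>)"
  define K where "K = sqrt (exp_norm_powr_const (2 * \<sigma> / 3) CARD('n))"
  define Z where "Z = 2 powr \<bar>p - r\<bar> * (1 + t) powr (r - p)"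
  have "0 \<le> K"
    using exp_norm_powr_const_nonneg by (simp add: K_def)
  consider "t \<le> 1" | "1 \<le> t" by linarith
  then have "?L \<le> (sqrt 3 + K) * 8 ^ 4 * Z * B_norm \<sigma> v0 v1 v2"
  proof cases
    case 1
    have "1 \<le> Z"
      using one_le_two_powr_mult_one_plus_powr[OF \<open>0 \<le> t\<close> 1, of "p - r"] by (simp add: Z_def)
    then have "sqrt 3 * 8 ^ 4 \<le> (sqrt 3 + K) * 8 ^ 4 * Z"
      using \<open>0 \<le> K\<close> mult_left_mono[of 1 Z "(sqrt 3 + K) * 8 ^ 4"] by simp
    moreover have "?L \<le> sqrt 3 * 8 ^ 4 * B_norm \<sigma> v0 v1 v2"
      using G 1 by (intro L2norm_small_time[OF assms(1) B \<open>0 \<le> t\<close>])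
        (simp add: multiplier_bound_def damping_rate_nonneg)
    ultimately show ?thesis
      using B_norm_nonneg by (meson mult_right_mono order_trans)
  next
    case 2
    have "t powr (r - p) \<le> Z"
      using powr_le_two_powr_mult_one_plus_powr[OF 2, of "p - r"] by (simp add: Z_def)
    then have "K * t powr (r - p) \<le> (sqrt 3 + K) * Z"
      using \<open>0 \<le> K\<close> by (intro mult_mono) auto
    from mult_right_mono[OF mult_left_mono[OF this, of "8 ^ 4"] B_norm_nonneg]
    have "8 ^ 4 * K * t powr (r - p) * B_norm \<sigma> v0 v1 v2 \<le> (sqrt 3 + K) * 8 ^ 4 * Z * B_norm \<sigma> v0 v1 v2"
      by (simp add: mult_ac)
    moreover have "?L \<le> 8 ^ 4 * K * t powr (r - p) * B_norm \<sigma> v0 v1 v2"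
      using G 2 unfolding K_def p_def
      by (intro L2norm_large_time[OF assms(1) 2]) (simp add: multiplier_bound_def damping_rate_nonneg)
    ultimately show ?thesis
      by linarith
  qed
  also have "\<dots> \<le> decay_const \<sigma> CARD('n) * (1 + t) powr (r - p) * B_norm \<sigma> v0 v1 v2"
    using mult_right_mono[OF mult_right_mono[OF decay_const_ge[OF assms(1) \<open>\<bar>r\<bar> \<le> 2\<close>, of "CARD('n)"]
        powr_ge_zero[of "1 + t" "r - p"]] B_norm_nonneg[of \<sigma> v0 v1 v2]]
    unfolding Z_def K_def p_def by (simp add: mult.assoc)
  finally show ?thesis
    by (simp add: p_def)
qed

lemma solves_L_eq_triple_root_solution:
  assumes "solves_L \<sigma> 3 u0 u1 u2 V" "0 \<le> t"
  shows "V t \<xi> = triple_root_solution (damping_rate \<sigma> \<xi>) t (u0 \<xi>) (u1 \<xi>) (u2 \<xi>)"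
proof -
  obtain D1 D2 D3 :: "real \<Rightarrow> complex" where
    d1: "\<forall>t\<ge>0. ((\<lambda>s. V s \<xi>) has_vector_derivative D1 t) (at t within {0..})" and
    d2: "\<forall>t\<ge>0. (D1 has_vector_derivative D2 t) (at t within {0..})" and
    d3: "\<forall>t>0. (D2 has_vector_derivative D3 t) (at t)" and
    ode: "\<forall>t>0. D3 t + complex_of_real (norm \<xi> powr (2 * \<sigma>)) * V t \<xi>
                + complex_of_real (3 * norm \<xi> powr (2 * \<sigma> / 3)) * D2 t
                + complex_of_real (3 * norm \<xi> powr (4 * \<sigma> / 3)) * D1 t = 0" and
    init: "V 0 \<xi> = u0 \<xi>" "D1 0 = u1 \<xi>" "D2 0 = u2 \<xi>"
    using assms(1) unfolding solves_L_def by blast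
  have pw: "norm \<xi> powr (2 * \<sigma>) = (damping_rate \<sigma> \<xi>) ^ 3"
    "norm \<xi> powr (4 * \<sigma> / 3) = (damping_rate \<sigma> \<xi>)\<^sup>2"
    by (simp_all add: damping_rate_def powr_power_nonneg)
  have ode': "D3 t + of_real ((damping_rate \<sigma> \<xi>) ^ 3) * V t \<xi>
      + of_real (3 * damping_rate \<sigma> \<xi>) * D2 t + of_real (3 * (damping_rate \<sigma> \<xi>)\<^sup>2) * D1 t = 0"
    if "t > 0" for t
    using ode[rule_format, OF that] unfolding pw damping_rate_def[symmetric] .
  show ?thesis
    using triple_root_ode_solution[where V = "\<lambda>s. V s \<xi>", OF _ _ _ ode' assms(2)] d1 d2 d3
    unfolding init by blast
qed

lemma hom_weight_eq_damping_rate: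
  "hom_weight (4 * \<sigma> / 3) f = (\<lambda>\<xi>. of_real ((damping_rate \<sigma> \<xi>)\<^sup>2) * f \<xi>)"
  by (simp add: hom_weight_def damping_rate_def powr_power_nonneg fun_eq_iff)

lemma solves_L_zero_data_estimate:
  fixes g :: "real^'n \<Rightarrow> complex"
  assumes "sq_int g" "solves_L \<sigma> 3 (\<lambda>_. 0) (\<lambda>_. 0) g V" "0 \<le> t"
  shows "L2norm (hom_weight (4 * \<sigma> / 3) (V t)) \<le> 8 ^ 4 * L2norm g"
proof -
  have "L2norm (hom_weight (4 * \<sigma> / 3) (V t)) \<le> sqrt (\<integral>\<xi>. (8 ^ 4)\<^sup>2 * (cmod (g \<xi>))\<^sup>2 \<partial>lborel)"
  proof (rule L2norm_le_sqrt_integral)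
    show "integrable lborel (\<lambda>\<xi>. (8 ^ 4)\<^sup>2 * (cmod (g \<xi>))\<^sup>2)"
      using assms(1) by (simp add: sq_int_def)
    fix \<xi>
    have "cmod (hom_weight (4 * \<sigma> / 3) (V t) \<xi>) \<le> 8 ^ 4 * cmod (g \<xi>)"
      unfolding hom_weight_eq_damping_rate solves_L_eq_triple_root_solution[OF assms(2,3)]
      by (intro triple_root_solution_third_datum damping_rate_nonneg assms(3))
    then show "(cmod (hom_weight (4 * \<sigma> / 3) (V t) \<xi>))\<^sup>2 \<le> (8 ^ 4)\<^sup>2 * (cmod (g \<xi>))\<^sup>2"
      using power_mono[where n = 2] by (fastforce simp: power_mult_distrib)
  qed
  also have "\<dots> = 8 ^ 4 * L2norm g"
    by (simp add: L2norm_def real_sqrt_mult)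
  finally show ?thesis .
qed

lemma solves_L_decay_estimates:
  fixes v0 v1 v2 :: "real^'n \<Rightarrow> complex"
  assumes "\<sigma> > 0" and B: "in_B \<sigma> v0 v1 v2" and V: "solves_L \<sigma> 3 (fourier v0) (fourier v1) (fourier v2) V"
    and "0 \<le> t" and C: "decay_const \<sigma> CARD('n) \<le> C"
  defines "R \<equiv> \<lambda>\<xi>. V t \<xi> - complex_of_real (t\<^sup>2 / 2 * exp (- (norm \<xi> powr (2*\<sigma>/3)) * t)) * fourier v2 \<xi>"
  shows "L2norm (V t) \<le> C * (1 + t) powr (- (3 * real CARD('n) - 8*\<sigma>) / (4*\<sigma>)) * B_norm \<sigma> v0 v1 v2"
    and "L2norm (hom_weight (4*\<sigma>/3) (V t)) \<le> C * (1 + t) powr (- (3 * real CARD('n)) / (4*\<sigma>)) * B_norm \<sigma> v0 v1 v2"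
    and "L2norm R \<le> C * (1 + t) powr (- (3 * real CARD('n) - 4*\<sigma>) / (4*\<sigma>)) * B_norm \<sigma> v0 v1 v2"
    and "L2norm (hom_weight (4*\<sigma>/3) R) \<le> C * (1 + t) powr (- (3 * real CARD('n) + 4*\<sigma>) / (4*\<sigma>)) * B_norm \<sigma> v0 v1 v2"
proof -
  define p where "p = 3 * real CARD('n) / (4 * \<sigma>)"
  have decay: "L2norm (\<lambda>\<xi>. G (damping_rate \<sigma> \<xi>) (fourier v0 \<xi>) (fourier v1 \<xi>) (fourier v2 \<xi>))
      \<le> C * (1 + t) powr (r - p) * B_norm \<sigma> v0 v1 v2"
    if "\<bar>r\<bar> \<le> 2" "multiplier_bound r t G" for r G
    using L2norm_decay_of_multiplier_bound[OF assms(1) B that(1) \<open>0 \<le> t\<close> that(2)]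
      mult_right_mono[OF mult_right_mono[OF C powr_ge_zero[of "1 + t" "r - p"]] B_norm_nonneg[of \<sigma> v0 v1 v2]]
    unfolding p_def by linarith
  have exponents: "2 - p = - (3 * real CARD('n) - 8*\<sigma>) / (4*\<sigma>)" "0 - p = - (3 * real CARD('n)) / (4*\<sigma>)"
    "1 - p = - (3 * real CARD('n) - 4*\<sigma>) / (4*\<sigma>)" "-1 - p = - (3 * real CARD('n) + 4*\<sigma>) / (4*\<sigma>)"
    using assms by (simp_all add: p_def field_simps)
  have Vt: "V t = (\<lambda>\<xi>. triple_root_solution (damping_rate \<sigma> \<xi>) t (fourier v0 \<xi>) (fourier v1 \<xi>) (fourier v2 \<xi>))"
    using solves_L_eq_triple_root_solution[OF V \<open>0 \<le> t\<close>] by blast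
  have Rt: "R = (\<lambda>\<xi>. triple_root_solution (damping_rate \<sigma> \<xi>) t (fourier v0 \<xi>) (fourier v1 \<xi>) 0)"
    unfolding R_def Vt by (simp add: triple_root_solution_def triple_root_kernel2_def damping_rate_def)
  note bounds = triple_root_multiplier_bounds[OF \<open>0 \<le> t\<close>]
  show "L2norm (V t) \<le> C * (1 + t) powr (- (3 * real CARD('n) - 8*\<sigma>) / (4*\<sigma>)) * B_norm \<sigma> v0 v1 v2"
    unfolding exponents(1)[symmetric] Vt using decay[OF _ bounds(1)] by simp
  show "L2norm (hom_weight (4*\<sigma>/3) (V t)) \<le> C * (1 + t) powr (- (3 * real CARD('n)) / (4*\<sigma>)) * B_norm \<sigma> v0 v1 v2"
    unfolding exponents(2)[symmetric] hom_weight_eq_damping_rate Vt using decay[OF _ bounds(2)] by simp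
  show "L2norm R \<le> C * (1 + t) powr (- (3 * real CARD('n) - 4*\<sigma>) / (4*\<sigma>)) * B_norm \<sigma> v0 v1 v2"
    unfolding exponents(3)[symmetric] Rt using decay[OF _ bounds(3)] by simp
  show "L2norm (hom_weight (4*\<sigma>/3) R) \<le> C * (1 + t) powr (- (3 * real CARD('n) + 4*\<sigma>) / (4*\<sigma>)) * B_norm \<sigma> v0 v1 v2"
    unfolding exponents(4)[symmetric] hom_weight_eq_damping_rate Rt using decay[OF _ bounds(4)] by simp
qed

theorem proposition3p4:
  fixes \<sigma> :: real
  assumes "\<sigma> > 0"
  shows "\<exists>C>0.
    (\<forall>(v0::real^'n::finite \<Rightarrow> complex) v1 v2 V. in_B \<sigma> v0 v1 v2 \<and>
        solves_L \<sigma> 3 (fourier v0) (fourier v1) (fourier v2) V \<longrightarrow>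
      (\<forall>t\<ge>0.
        L2norm (V t) \<le> C * (1 + t) powr (- (3 * real CARD('n) - 8*\<sigma>) / (4*\<sigma>)) * B_norm \<sigma> v0 v1 v2 \<and>
        L2norm (hom_weight (4*\<sigma>/3) (V t)) \<le> C * (1 + t) powr (- (3 * real CARD('n)) / (4*\<sigma>)) * B_norm \<sigma> v0 v1 v2 \<and>
        L2norm (\<lambda>\<xi>. V t \<xi> - complex_of_real (t\<^sup>2 / 2 * exp (- (norm \<xi> powr (2*\<sigma>/3)) * t)) * fourier v2 \<xi>)
          \<le> C * (1 + t) powr (- (3 * real CARD('n) - 4*\<sigma>) / (4*\<sigma>)) * B_norm \<sigma> v0 v1 v2 \<and>
        L2norm (hom_weight (4*\<sigma>/3) (\<lambda>\<xi>. V t \<xi> - complex_of_real (t\<^sup>2 / 2 * exp (- (norm \<xi> powr (2*\<sigma>/3)) * t)) * fourier v2 \<xi>))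
          \<le> C * (1 + t) powr (- (3 * real CARD('n) + 4*\<sigma>) / (4*\<sigma>)) * B_norm \<sigma> v0 v1 v2)) \<and>
    (\<forall>(g::real^'n \<Rightarrow> complex) V. sq_int g \<and> solves_L \<sigma> 3 (\<lambda>_. 0) (\<lambda>_. 0) g V \<longrightarrow>
      (\<forall>t\<ge>0. L2norm (hom_weight (4*\<sigma>/3) (V t)) \<le> C * L2norm g))"
proof -
  define C where "C = max (decay_const \<sigma> CARD('n)) (8 ^ 4)"
  have "decay_const \<sigma> CARD('n) \<le> C"
    by (simp add: C_def)
  moreover have "C > 0"
    by (simp add: C_def)
  moreover have "L2norm (hom_weight (4*\<sigma>/3) (V t)) \<le> C * L2norm g"
    if "sq_int g" "solves_L \<sigma> 3 (\<lambda>_. 0) (\<lambda>_. 0) g V" "0 \<le> t" for g :: "real^'n \<Rightarrow> complex" and V t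
    unfolding C_def
    by (rule order_trans[OF solves_L_zero_data_estimate[OF that] mult_right_mono[OF max.cobounded2 L2norm_nonneg]])
  ultimately show ?thesis
    using solves_L_decay_estimates[OF assms _ _ _ \<open>decay_const \<sigma> CARD('n) \<le> C\<close>]
    by (intro exI[of _ C]) auto
qed

end
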